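(* Let $M$ be a matroid flock on a finite set $E$, let $\alpha\in\mathbb{Z}^E$ and let $I\subseteq J\subseteq E$. Then $r_\alpha(J)=r_\alpha(I)+r_{\alpha+e_I}(J\setminus I)$.
   Context: $e_I:=\sum_{i\in I}e_i$ ($e_i$ unit vectors in $\mathbb{Z}^E$), $\mathbf{1}:=e_E$. A matroid flock of rank $d$ on $E$ is a map $M$ assigning to each $\alpha\in\mathbb{Z}^E$ a matroid $M_\alpha$ on $E$ of rank $d$ with (MF1) $M_\alpha/i=M_{\alpha+e_i}\setminus i$ for all $\alpha$, $i\in E$ (contraction, deletion); and (MF2) $M_\alpha=M_{\alpha+\mathbf{1}}$ for all $\alpha$. $r_\alpha$ denotes the rank function of $M_\alpha$. *)

theory Defs
  imports Main "HOL-Library.Function_Algebras"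
begin

definition matroid :: "'a set \<Rightarrow> 'a set set \<Rightarrow> bool" where
  "matroid E Ind \<longleftrightarrow> finite E \<and> Ind \<subseteq> Pow E \<and> {} \<in> Ind
     \<and> (\<forall>X Y. X \<in> Ind \<and> Y \<subseteq> X \<longrightarrow> Y \<in> Ind)
     \<and> (\<forall>X Y. X \<in> Ind \<and> Y \<in> Ind \<and> card X < card Y \<longrightarrow> (\<exists>y\<in>Y - X. insert y X \<in> Ind))"

definition rk :: "'a set set \<Rightarrow> 'a set \<Rightarrow> nat" where
  "rk Ind X = Max {card Y | Y. Y \<subseteq> X \<and> Y \<in> Ind}"

definition mdelete :: "'a set set \<Rightarrow> 'a \<Rightarrow> 'a set set" where
  "mdelete Ind i = {X \<in> Ind. i \<notin> X}"

definition mcontract :: "'a set set \<Rightarrow> 'a \<Rightarrow> 'a set set" where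
  "mcontract Ind i = (if {i} \<in> Ind then {X. i \<notin> X \<and> insert i X \<in> Ind}
                      else {X \<in> Ind. i \<notin> X})"

definition evec :: "'a set \<Rightarrow> 'a \<Rightarrow> int" where
  "evec I = (\<lambda>x. if x \<in> I then 1 else 0)"

definition ZE :: "'a set \<Rightarrow> ('a \<Rightarrow> int) set" where
  "ZE E = {\<alpha>. \<forall>x. x \<notin> E \<longrightarrow> \<alpha> x = 0}"

definition matroid_flock :: "'a set \<Rightarrow> nat \<Rightarrow> (('a \<Rightarrow> int) \<Rightarrow> 'a set set) \<Rightarrow> bool" where
  "matroid_flock E d M \<longleftrightarrow>
     (\<forall>\<alpha>\<in>ZE E. matroid E (M \<alpha>) \<and> rk (M \<alpha>) E = d)
   \<and> (\<forall>\<alpha>\<in>ZE E. \<forall>i\<in>E. mcontract (M \<alpha>) i = mdelete (M (\<alpha> + evec {i})) i)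
   \<and> (\<forall>\<alpha>\<in>ZE E. M \<alpha> = M (\<alpha> + evec E))"

end

theory Submission
  imports Defs
begin

text \<open>For a single element i of K, the rank of K splits as the rank of {i} plus the rank of
  K - {i} in the contraction by i. Axiom (MF1) replaces that contraction of M(\<alpha>) by the
  deletion of i from M(\<alpha> + e_i), and deleting i does not change ranks of sets avoiding i.
  Peeling off the elements of I one at a time and telescoping gives the theorem.\<close>

lemma matroid_finite: "matroid E Ind \<Longrightarrow> finite E"
  unfolding matroid_def by (elim conjE)

lemma matroid_indep_subset_ground: "matroid E Ind \<Longrightarrow> X \<in> Ind \<Longrightarrow> X \<subseteq> E"
  unfolding matroid_def by blast

lemma matroid_empty_indep: "matroid E Ind \<Longrightarrow> {} \<in> Ind"
  unfolding matroid_def by (elim conjE)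

lemma matroid_indep_subset: "matroid E Ind \<Longrightarrow> X \<in> Ind \<Longrightarrow> Y \<subseteq> X \<Longrightarrow> Y \<in> Ind"
  unfolding matroid_def by (elim conjE) blast

lemma matroid_augment:
  "matroid E Ind \<Longrightarrow> X \<in> Ind \<Longrightarrow> Y \<in> Ind \<Longrightarrow> card X < card Y \<Longrightarrow>
    \<exists>y\<in>Y - X. insert y X \<in> Ind"
  unfolding matroid_def by (elim conjE) blast

lemma matroid_indep_finite: "matroid E Ind \<Longrightarrow> X \<in> Ind \<Longrightarrow> finite X"
  by (meson matroid_finite matroid_indep_subset_ground finite_subset)

lemma matroid_augment_to_card:
  assumes m: "matroid E Ind" and Z: "Z \<in> Ind"
  shows "X \<in> Ind \<Longrightarrow> card X \<le> card Z \<Longrightarrow>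
    \<exists>W. X \<subseteq> W \<and> W \<subseteq> X \<union> Z \<and> W \<in> Ind \<and> card W = card Z"
proof (induction "card Z - card X" arbitrary: X)
  case 0
  then show ?case by (intro exI[of _ X]) auto
next
  case (Suc k)
  then have "card X < card Z" by simp
  then obtain y where y: "y \<in> Z - X" "insert y X \<in> Ind"
    using matroid_augment[OF m Suc.prems(1) Z] by blast
  have "card (insert y X) = Suc (card X)"
    using y matroid_indep_finite[OF m Suc.prems(1)] by simp
  then have "k = card Z - card (insert y X)" "card (insert y X) \<le> card Z"
    using Suc.hyps(2) by linarith+
  then obtain W where "insert y X \<subseteq> W" "W \<subseteq> insert y X \<union> Z" "W \<in> Ind" "card W = card Z"
    using Suc.hyps(1) y(2) by blast
  then show ?case using y by (intro exI[of _ W]) auto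
qed

lemma rk_eqI:
  assumes "\<And>Y. Y \<subseteq> X \<Longrightarrow> Y \<in> Ind \<Longrightarrow> card Y \<le> n"
    and "Y0 \<subseteq> X" "Y0 \<in> Ind" "card Y0 = n"
  shows "rk Ind X = n"
proof -
  let ?S = "{card Y | Y. Y \<subseteq> X \<and> Y \<in> Ind}"
  have "finite ?S"
    by (rule finite_subset[of _ "{..n}"]) (use assms(1) in auto)
  then show ?thesis
    unfolding rk_def by (rule Max_eqI) (use assms in auto)
qed

lemma finite_rk_candidates:
  assumes "matroid E Ind"
  shows "finite {card Y | Y. Y \<subseteq> X \<and> Y \<in> Ind}"
proof -
  have "Ind \<subseteq> Pow E"
    using matroid_indep_subset_ground[OF assms] by blast
  then have "finite Ind"
    using matroid_finite[OF assms] by (simp add: finite_subset)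
  then show ?thesis
    by (rule finite_subset[rotated, OF finite_imageI[of _ card]]) auto
qed

lemma card_le_rk:
  assumes "matroid E Ind" "Y \<subseteq> X" "Y \<in> Ind"
  shows "card Y \<le> rk Ind X"
  unfolding rk_def using finite_rk_candidates[OF assms(1)] assms(2,3) by (intro Max_ge) auto

lemma rk_attained:
  assumes "matroid E Ind"
  obtains Y where "Y \<subseteq> X" "Y \<in> Ind" "card Y = rk Ind X"
proof -
  have "{card Y | Y. Y \<subseteq> X \<and> Y \<in> Ind} \<noteq> {}"
    using matroid_empty_indep[OF assms] by blast
  then have "rk Ind X \<in> {card Y | Y. Y \<subseteq> X \<and> Y \<in> Ind}"
    unfolding rk_def by (rule Max_in[OF finite_rk_candidates[OF assms]])
  then show ?thesis using that by auto
qed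

lemma rk_empty: "matroid E Ind \<Longrightarrow> rk Ind {} = 0"
  by (rule rk_eqI[of _ _ _ "{}"]) (auto dest: matroid_empty_indep)

lemma rk_mdelete:
  assumes "i \<notin> X"
  shows "rk (mdelete Ind i) X = rk Ind X"
proof -
  have "{card Y | Y. Y \<subseteq> X \<and> Y \<in> mdelete Ind i} = {card Y | Y. Y \<subseteq> X \<and> Y \<in> Ind}"
    using assms unfolding mdelete_def by blast
  then show ?thesis unfolding rk_def by simp
qed

lemma rk_mcontract_loop:
  assumes m: "matroid E Ind" and loop: "{i} \<notin> Ind"
  shows "rk Ind {i} = 0" and "rk (mcontract Ind i) (K - {i}) = rk Ind K"
proof -
  have avoid_i: "i \<notin> Y" if "Y \<in> Ind" for Y
    using loop matroid_indep_subset[OF m that, of "{i}"] by blast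
  show "rk Ind {i} = 0"
    by (rule rk_eqI[of _ _ _ "{}"])
      (use avoid_i matroid_empty_indep[OF m] in \<open>auto simp: subset_singleton_iff\<close>)
  obtain Z where Z: "Z \<subseteq> K" "Z \<in> Ind" "card Z = rk Ind K"
    using rk_attained[OF m] by blast
  show "rk (mcontract Ind i) (K - {i}) = rk Ind K"
  proof (rule rk_eqI[of _ _ _ Z])
    fix Y assume "Y \<subseteq> K - {i}" "Y \<in> mcontract Ind i"
    then show "card Y \<le> rk Ind K"
      using loop card_le_rk[OF m, of Y K] unfolding mcontract_def by auto
  qed (use Z avoid_i loop in \<open>auto simp: mcontract_def\<close>)
qed

lemma rk_mcontract_nonloop:
  assumes m: "matroid E Ind" and nonloop: "{i} \<in> Ind" and "i \<in> K"
  shows "rk Ind {i} = 1" and "rk (mcontract Ind i) (K - {i}) = rk Ind K - 1"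
    and "1 \<le> rk Ind K"
proof -
  show "rk Ind {i} = 1"
    by (rule rk_eqI[of _ _ _ "{i}"]) (use nonloop in \<open>auto simp: subset_singleton_iff\<close>)
  show K_pos: "1 \<le> rk Ind K"
    using card_le_rk[OF m, of "{i}" K] nonloop \<open>i \<in> K\<close> by auto
  obtain Z where Z: "Z \<subseteq> K" "Z \<in> Ind" "card Z = rk Ind K"
    using rk_attained[OF m] by blast
  obtain W where W: "{i} \<subseteq> W" "W \<subseteq> {i} \<union> Z" "W \<in> Ind" "card W = card Z"
    using matroid_augment_to_card[OF m Z(2) nonloop] K_pos Z(3) by auto
  show "rk (mcontract Ind i) (K - {i}) = rk Ind K - 1"
  proof (rule rk_eqI[of _ _ _ "W - {i}"])
    fix Y assume Y: "Y \<subseteq> K - {i}" "Y \<in> mcontract Ind i"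
    then have "insert i Y \<in> Ind" "i \<notin> Y"
      using nonloop unfolding mcontract_def by auto
    moreover have "insert i Y \<subseteq> K" using Y \<open>i \<in> K\<close> by blast
    ultimately show "card Y \<le> rk Ind K - 1"
      using card_le_rk[OF m, of "insert i Y" K] matroid_indep_finite[OF m] by fastforce
  next
    have "insert i (W - {i}) = W" using W by blast
    then show "W - {i} \<in> mcontract Ind i"
      using W nonloop unfolding mcontract_def by simp
    show "W - {i} \<subseteq> K - {i}" using W Z \<open>i \<in> K\<close> by auto
    show "card (W - {i}) = rk Ind K - 1"
      using W Z matroid_indep_finite[OF m W(3)] by auto
  qed
qed

lemma rk_split_mcontract:
  assumes "matroid E Ind" and "i \<in> K"
  shows "rk Ind K = rk Ind {i} + rk (mcontract Ind i) (K - {i})"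
proof (cases "{i} \<in> Ind")
  case True
  then show ?thesis using rk_mcontract_nonloop[OF assms(1) True assms(2)] by simp
next
  case False
  then show ?thesis using rk_mcontract_loop[OF assms(1) False] by simp
qed

lemma evec_empty: "evec {} = 0"
  unfolding evec_def by (simp add: fun_eq_iff)

lemma evec_insert: "i \<notin> I \<Longrightarrow> evec (insert i I) = evec I + evec {i}"
  unfolding evec_def by (auto simp: fun_eq_iff)

lemma ZE_add_evec: "\<alpha> \<in> ZE E \<Longrightarrow> I \<subseteq> E \<Longrightarrow> \<alpha> + evec I \<in> ZE E"
  unfolding ZE_def evec_def by auto

lemma matroid_flock_matroid: "matroid_flock E d M \<Longrightarrow> \<alpha> \<in> ZE E \<Longrightarrow> matroid E (M \<alpha>)"
  unfolding matroid_flock_def by blast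

lemma matroid_flock_mcontract:
  "matroid_flock E d M \<Longrightarrow> \<alpha> \<in> ZE E \<Longrightarrow> i \<in> E \<Longrightarrow>
    mcontract (M \<alpha>) i = mdelete (M (\<alpha> + evec {i})) i"
  unfolding matroid_flock_def by blast

lemma matroid_flock_rk_split_single:
  assumes fl: "matroid_flock E d M" and \<alpha>: "\<alpha> \<in> ZE E" and "i \<in> K" "K \<subseteq> E"
  shows "rk (M \<alpha>) K = rk (M \<alpha>) {i} + rk (M (\<alpha> + evec {i})) (K - {i})"
proof -
  have "rk (M \<alpha>) K = rk (M \<alpha>) {i} + rk (mcontract (M \<alpha>) i) (K - {i})"
    using rk_split_mcontract[OF matroid_flock_matroid[OF fl \<alpha>] \<open>i \<in> K\<close>] .
  also have "rk (mcontract (M \<alpha>) i) (K - {i}) = rk (M (\<alpha> + evec {i})) (K - {i})"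
    using matroid_flock_mcontract[OF fl \<alpha>] assms(3,4) by (auto simp: rk_mdelete)
  finally show ?thesis .
qed

lemma matroid_flock_rk_split:
  assumes fl: "matroid_flock E d M" and "finite I"
    and "\<alpha> \<in> ZE E" "I \<subseteq> J" "J \<subseteq> E"
  shows "rk (M \<alpha>) J = rk (M \<alpha>) I + rk (M (\<alpha> + evec I)) (J - I)"
  using assms(2-)
proof (induction I arbitrary: J rule: finite_induct)
  case empty
  then show ?case
    using rk_empty[OF matroid_flock_matroid[OF fl]] by (simp add: evec_empty)
next
  case (insert i I)
  define \<beta> where "\<beta> = \<alpha> + evec I"
  have \<beta>: "\<beta> \<in> ZE E"
    unfolding \<beta>_def using ZE_add_evec insert.prems by blast
  have \<beta>_i: "\<beta> + evec {i} = \<alpha> + evec (insert i I)"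
    unfolding \<beta>_def by (simp add: evec_insert[OF insert.hyps(2)] add.assoc)
  have IH_J: "rk (M \<alpha>) J = rk (M \<alpha>) I + rk (M \<beta>) (J - I)"
    unfolding \<beta>_def by (rule insert.IH) (use insert.prems in auto)
  have IH_insert: "rk (M \<alpha>) (insert i I) = rk (M \<alpha>) I + rk (M \<beta>) (insert i I - I)"
    unfolding \<beta>_def by (rule insert.IH) (use insert.prems in auto)
  have split_i: "rk (M \<beta>) (J - I) = rk (M \<beta>) {i} + rk (M (\<beta> + evec {i})) (J - I - {i})"
    by (rule matroid_flock_rk_split_single[OF fl \<beta>]) (use insert.prems insert.hyps(2) in auto)
  have "insert i I - I = {i}" "J - I - {i} = J - insert i I"
    using insert.hyps(2) by auto
  with IH_J IH_insert split_i show ?case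
    unfolding \<beta>_i by (simp only:)
qed

theorem mainTheorem9:
  fixes E :: "'a set" and d :: nat and M :: "('a \<Rightarrow> int) \<Rightarrow> 'a set set"
    and \<alpha> :: "'a \<Rightarrow> int" and I J :: "'a set"
  assumes "finite E" and "matroid_flock E d M" and "\<alpha> \<in> ZE E"
    and "I \<subseteq> J" and "J \<subseteq> E"
  shows "rk (M \<alpha>) J = rk (M \<alpha>) I + rk (M (\<alpha> + evec I)) (J - I)"
proof -
  have "finite I" using assms by (meson finite_subset)
  then show ?thesis using matroid_flock_rk_split[OF assms(2)] assms(3-5) by blast
qed

end
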